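(* Let $a,b,c\in\mathbb{R}^n$. Then the set $\{X\in\mathbb{S}^n_+:\ a^\top Xc\ge 0,\ b^\top Xc\ge 0\}$ is rank-one generated.
   Context: $\mathbb{S}^n_+$ is the cone of real symmetric positive semidefinite $n\times n$ matrices. A closed convex cone $\mathcal{S}\subseteq\mathbb{S}^n_+$ is rank-one generated (ROG) if $\mathcal{S}=\mathrm{conv}(\mathcal{S}\cap\{xx^\top:x\in\mathbb{R}^n\})$. *)

theory Defs
  imports "HOL-Analysis.Analysis"
begin

definition psd_cone :: "(real^'n^'n) set" where
  "psd_cone = {X. transpose X = X \<and> (\<forall>x. 0 \<le> x \<bullet> (X *v x))}"

definition outer :: "real^'n \<Rightarrow> real^'n^'n" where
  "outer x = (\<chi> i j. x $ i * x $ j)"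

definition rank_one_mats :: "(real^'n^'n) set" where
  "rank_one_mats = {outer x | x. True}"

definition ROG :: "(real^'n^'n) set \<Rightarrow> bool" where
  "ROG S \<longleftrightarrow> S \<subseteq> psd_cone \<and> closed S \<and> convex S \<and> cone S
      \<and> S = convex hull (S \<inter> rank_one_mats)"

end

theory Submission
  imports Defs
begin

text \<open>Let \<open>S\<close> be the set in question. Given \<open>X \<in> S\<close> with \<open>s = c\<^sup>T X c > 0\<close>, put
  \<open>y = X c / \<surd>s\<close>. Then \<open>y y\<^sup>T c = X c\<close>, so \<open>y y\<^sup>T \<in> S\<close>, and the Schur complement
  \<open>R = X - y y\<^sup>T\<close> is positive semidefinite with \<open>R c = 0\<close>. Writing \<open>R = \<Sum> x\<^sub>i x\<^sub>i\<^sup>T\<close>, the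
  identity \<open>0 = c\<^sup>T R c = \<Sum> (x\<^sub>i\<^sup>T c)\<^sup>2\<close> forces \<open>x\<^sub>i\<^sup>T c = 0\<close>, so \<open>x\<^sub>i x\<^sub>i\<^sup>T c = 0\<close> and again
  \<open>x\<^sub>i x\<^sub>i\<^sup>T \<in> S\<close>. (If \<open>s = 0\<close> then already \<open>X c = 0\<close> and \<open>y = 0\<close> works.) The argument only uses
  that the constraints restrict \<open>X c\<close> to a closed convex cone.\<close>

lemma outer_mult: "outer x *v v = (x \<bullet> v) *\<^sub>R x"
  by (simp add: vec_eq_iff outer_def matrix_vector_mult_def inner_vec_def
      sum_distrib_left sum_distrib_right mult_ac)

lemma outer_0 [simp]: "outer 0 = 0"
  by (simp add: vec_eq_iff outer_def)

lemma scaleR_outer: "0 \<le> t \<Longrightarrow> t *\<^sub>R outer x = outer (sqrt t *\<^sub>R x)"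
  by (simp add: vec_eq_iff outer_def mult_ac)

lemma transpose_outer: "transpose (outer x) = outer x"
  by (simp add: vec_eq_iff outer_def transpose_def mult.commute)

lemma outer_in_psd_cone: "outer x \<in> psd_cone"
  by (simp add: psd_cone_def transpose_outer outer_mult inner_commute)

lemma outer_in_rank_one_mats: "outer x \<in> rank_one_mats"
  by (auto simp: rank_one_mats_def)

lemma inner_sum_list_outer_mult:
  "v \<bullet> (sum_list (map outer xs) *v v) = (\<Sum>x\<leftarrow>xs. (x \<bullet> v)\<^sup>2)"
  by (induction xs) (auto simp: matrix_vector_mult_add_rdistrib outer_mult inner_add_right
      power2_eq_square inner_commute)

lemma sum_list_outer_orthogonal:
  assumes "v \<bullet> (sum_list (map outer xs) *v v) = 0" and "x \<in> set xs"
  shows "x \<bullet> v = 0"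
proof -
  have "(\<Sum>x\<leftarrow>xs. (x \<bullet> v)\<^sup>2) = 0"
    using assms(1) by (simp add: inner_sum_list_outer_mult)
  then have "\<forall>q \<in> set (map (\<lambda>x. (x \<bullet> v)\<^sup>2) xs). q = 0"
    by (subst (asm) sum_list_nonneg_eq_0_iff) auto
  then show ?thesis using assms(2) by simp
qed

lemma bounded_linear_matrix_vector_mult_left: "bounded_linear (\<lambda>X::real^'n^'m. X *v v)"
  by (auto intro!: linearI simp: linear_conv_bounded_linear[symmetric]
      matrix_vector_mult_add_rdistrib scaleR_matrix_vector_assoc)

lemma continuous_on_matrix_vector_mult_left: "continuous_on A (\<lambda>X::real^'n^'m. X *v v)"
  by (intro linear_continuous_on bounded_linear_matrix_vector_mult_left)

lemma closed_psd_cone: "closed psd_cone"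
proof -
  have psd_cone_eq: "psd_cone = (\<Inter>i j. {X. X $ i $ j = X $ j $ i}) \<inter> (\<Inter>x. {X. 0 \<le> x \<bullet> (X *v x)})"
    by (auto simp: psd_cone_def vec_eq_iff transpose_def)
  show ?thesis
    unfolding psd_cone_eq by (intro closed_Int closed_INT ballI closed_Collect_eq closed_Collect_le
        continuous_intros continuous_on_matrix_vector_mult_left)
qed

lemma convex_cone_psd_cone: "convex_cone psd_cone"
  by (auto simp: convex_cone_iff psd_cone_def transpose_def vec_eq_iff algebra_simps
      inner_add_right scaleR_matrix_vector_assoc[symmetric])

lemma psd_inner_commute:
  "X \<in> psd_cone \<Longrightarrow> v \<bullet> (X *v w) = w \<bullet> (X *v v)"
  unfolding psd_cone_def by (metis (mono_tags) dot_lmul_matrix inner_commute mem_Collect_eq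
      transpose_matrix_vector)

lemma quadratic_nonneg_imp_discriminant:
  fixes \<alpha> \<beta> \<gamma> :: real
  assumes nonneg: "\<And>t. 0 \<le> \<alpha> - 2 * t * \<beta> + t\<^sup>2 * \<gamma>" and "0 \<le> \<gamma>"
  shows "\<beta>\<^sup>2 \<le> \<alpha> * \<gamma>"
proof (cases "\<gamma> = 0")
  case True
  have "\<beta> = 0"
  proof (rule ccontr)
    assume "\<beta> \<noteq> 0"
    then have "\<alpha> - 2 * ((\<alpha> + 1) / (2 * \<beta>)) * \<beta> = -1" by (simp add: field_simps)
    with nonneg[of "(\<alpha> + 1) / (2 * \<beta>)"] True show False by simp
  qed
  with True show ?thesis by simp
next
  case False
  with \<open>0 \<le> \<gamma>\<close> have "0 < \<gamma>" by simp
  have "0 \<le> \<alpha> - 2 * (\<beta> / \<gamma>) * \<beta> + (\<beta> / \<gamma>)\<^sup>2 * \<gamma>" by (rule nonneg)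
  also have "\<dots> = (\<alpha> * \<gamma> - \<beta>\<^sup>2) / \<gamma>"
    using \<open>0 < \<gamma>\<close> by (simp add: field_simps power2_eq_square)
  finally show ?thesis using \<open>0 < \<gamma>\<close> by (simp add: zero_le_divide_iff)
qed

lemma psd_cauchy_schwarz:
  assumes "X \<in> psd_cone"
  shows "(v \<bullet> (X *v w))\<^sup>2 \<le> (v \<bullet> (X *v v)) * (w \<bullet> (X *v w))"
proof (rule quadratic_nonneg_imp_discriminant)
  have form: "\<And>x. 0 \<le> x \<bullet> (X *v x)" using assms by (simp add: psd_cone_def)
  then show "0 \<le> w \<bullet> (X *v w)" .
  fix t
  have "0 \<le> (v - t *\<^sub>R w) \<bullet> (X *v (v - t *\<^sub>R w))" by (rule form)
  also have "\<dots> = v \<bullet> (X *v v) - 2 * t * (v \<bullet> (X *v w)) + t\<^sup>2 * (w \<bullet> (X *v w))"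
    using psd_inner_commute[OF assms, of w v]
    by (simp add: matrix_vector_mult_diff_distrib inner_diff_left inner_diff_right
        power2_eq_square algebra_simps)
  finally show "0 \<le> v \<bullet> (X *v v) - 2 * t * (v \<bullet> (X *v w)) + t\<^sup>2 * (w \<bullet> (X *v w))" .
qed

lemma psd_mult_eq_0:
  assumes "X \<in> psd_cone" and "e \<bullet> (X *v e) = 0"
  shows "X *v e = 0"
proof -
  have "((X *v e) \<bullet> (X *v e))\<^sup>2 \<le> 0"
    using psd_cauchy_schwarz[OF assms(1), of "X *v e" e] assms(2) by simp
  then show ?thesis by simp
qed

lemma psd_diff_outer_column:
  assumes X: "X \<in> psd_cone" and pos: "0 < e \<bullet> (X *v e)"
  defines "y \<equiv> (1 / sqrt (e \<bullet> (X *v e))) *\<^sub>R (X *v e)"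
  shows "X - outer y \<in> psd_cone" and "(X - outer y) *v e = 0"
    and "X *v v = 0 \<Longrightarrow> (X - outer y) *v v = 0"
proof -
  define s where "s = e \<bullet> (X *v e)"
  have "0 < s" using pos by (simp add: s_def)
  have y_inner: "y \<bullet> v = (e \<bullet> (X *v v)) / sqrt s" for v
    using psd_inner_commute[OF X, of v e] by (simp add: y_def s_def inner_commute)
  have diff_mult: "(X - outer y) *v v = X *v v - (y \<bullet> v) *\<^sub>R y" for v
    by (simp add: matrix_vector_mult_diff_rdistrib outer_mult)
  have "0 \<le> v \<bullet> ((X - outer y) *v v)" for v
  proof -
    have "(y \<bullet> v)\<^sup>2 = (v \<bullet> (X *v e))\<^sup>2 / s"
      using \<open>0 < s\<close> psd_inner_commute[OF X, of v e]
      by (simp add: y_inner power_divide s_def[symmetric])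
    also have "\<dots> \<le> v \<bullet> (X *v v)"
      using psd_cauchy_schwarz[OF X, of v e] \<open>0 < s\<close> by (simp add: s_def divide_le_eq)
    finally show ?thesis
      by (simp add: diff_mult inner_diff_right power2_eq_square inner_commute[of v y])
  qed
  moreover have "transpose (X - outer y) = X - outer y"
    using X transpose_outer[of y] by (simp add: psd_cone_def transpose_def vec_eq_iff)
  ultimately show "X - outer y \<in> psd_cone" by (simp add: psd_cone_def)
  have "(y \<bullet> e) *\<^sub>R y = X *v e"
    using \<open>0 < s\<close> by (simp add: y_inner s_def[symmetric]) (simp add: y_def s_def[symmetric])
  then show "(X - outer y) *v e = 0" by (simp add: diff_mult)
  show "(X - outer y) *v v = 0" if "X *v v = 0"
    using that by (simp add: diff_mult y_inner)
qed

lemma psd_split_outer: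
  assumes X: "X \<in> psd_cone"
  obtains y where "X - outer y \<in> psd_cone" and "(X - outer y) *v e = 0"
    and "\<And>v. X *v v = 0 \<Longrightarrow> (X - outer y) *v v = 0"
proof (cases "e \<bullet> (X *v e) = 0")
  case True
  with X have "X *v e = 0" by (rule psd_mult_eq_0)
  with X show ?thesis by (intro that[of 0]) simp_all
next
  case False
  then have "0 < e \<bullet> (X *v e)" using X by (simp add: psd_cone_def order_less_le)
  then show ?thesis using that psd_diff_outer_column[OF X] by blast
qed

lemma eq_0_if_mult_axis_eq_0: "(\<And>i. (X::real^'n^'m) *v axis i 1 = 0) \<Longrightarrow> X = 0"
  by (simp add: vec_eq_iff matrix_vector_mult_basis column_def)

lemma psd_eq_sum_list_outer:
  assumes "X \<in> psd_cone"
  obtains xs where "X = sum_list (map outer xs)"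
proof -
  have "\<exists>xs. X = sum_list (map outer xs)"
    if "finite I" "X \<in> psd_cone" "\<And>i. i \<notin> I \<Longrightarrow> X *v axis i 1 = 0" for I X
    \<comment> \<open>splitting off \<open>outer y\<close> along \<open>axis i 1\<close> kills column \<open>i\<close> and keeps all zero columns zero\<close>
    using that
  proof (induction I arbitrary: X rule: finite_induct)
    case empty
    then have "X = 0" by (intro eq_0_if_mult_axis_eq_0) simp
    then show ?case by (intro exI[of _ "[]"]) simp
  next
    case (insert i I)
    obtain y where psd: "X - outer y \<in> psd_cone" and col_i: "(X - outer y) *v axis i 1 = 0"
      and ker: "\<And>v. X *v v = 0 \<Longrightarrow> (X - outer y) *v v = 0"
      using psd_split_outer[OF insert.prems(1)] by blast
    have "(X - outer y) *v axis j 1 = 0" if "j \<notin> I" for j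
    proof (cases "j = i")
      case False
      with that insert.prems(2) have "X *v axis j 1 = 0" by simp
      then show ?thesis by (rule ker)
    qed (use col_i in simp)
    with psd obtain xs where "X - outer y = sum_list (map outer xs)"
      using insert.IH by blast
    then have "X = sum_list (map outer (y # xs))" by (simp add: algebra_simps)
    then show ?case by blast
  qed
  from this[of UNIV X] assms show ?thesis using that by auto
qed

lemma psd_eq_sum_list_outer_along:
  assumes X: "X \<in> psd_cone"
  obtains y xs where "X = sum_list (map outer (y # xs))" and "outer y *v c = X *v c"
    and "\<forall>x \<in> set xs. x \<bullet> c = 0"
proof -
  obtain y where R: "X - outer y \<in> psd_cone" and Rc: "(X - outer y) *v c = 0"
    using psd_split_outer[OF X] by blast
  obtain xs where xs: "X - outer y = sum_list (map outer xs)"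
    using psd_eq_sum_list_outer[OF R] by blast
  have "X = sum_list (map outer (y # xs))"
    using xs by (simp add: algebra_simps)
  moreover have "outer y *v c = X *v c"
    using Rc by (simp add: matrix_vector_mult_diff_rdistrib)
  moreover have "\<forall>x \<in> set xs. x \<bullet> c = 0"
    using sum_list_outer_orthogonal[of c xs] Rc xs by simp
  ultimately show ?thesis by (rule that)
qed

lemma convex_cone_sum_list: "convex_cone S \<Longrightarrow> set xs \<subseteq> S \<Longrightarrow> sum_list xs \<in> S"
  by (induction xs) (auto simp: convex_cone_iff)

lemma convex_hull_rank_one_mats_eq:
  assumes S: "convex_cone S"
    and decomp: "\<And>X. X \<in> S \<Longrightarrow> \<exists>xs. X = sum_list (map outer xs) \<and> (\<forall>x \<in> set xs. outer x \<in> S)"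
  shows "convex hull (S \<inter> rank_one_mats) = S"
proof
  let ?T = "S \<inter> rank_one_mats"
  have "cone ?T"
  proof (unfold cone_def, intro ballI allI impI)
    fix X and t :: real
    assume "X \<in> ?T" and "0 \<le> t"
    then obtain x where "X = outer x" and "X \<in> S" by (auto simp: rank_one_mats_def)
    with \<open>0 \<le> t\<close> S have "t *\<^sub>R X \<in> S" by (simp add: convex_cone_scaleR)
    moreover have "t *\<^sub>R X = outer (sqrt t *\<^sub>R x)"
      using \<open>0 \<le> t\<close> \<open>X = outer x\<close> by (simp add: scaleR_outer)
    ultimately show "t *\<^sub>R X \<in> ?T" by (simp add: outer_in_rank_one_mats)
  qed
  moreover have "0 \<in> ?T"
    using S convex_cone_contains_0 outer_in_rank_one_mats[of 0] by auto
  ultimately have hull_T: "convex_cone (convex hull ?T)"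
    by (metis convex_cone convex_cone_iff cone_convex_hull convex_convex_hull hull_inc)
  show "S \<subseteq> convex hull ?T"
  proof
    fix X assume "X \<in> S"
    then obtain xs where "X = sum_list (map outer xs)" and "\<forall>x \<in> set xs. outer x \<in> S"
      using decomp by blast
    moreover have "set (map outer xs) \<subseteq> convex hull ?T"
      using \<open>\<forall>x \<in> set xs. outer x \<in> S\<close> by (auto intro: hull_inc simp: outer_in_rank_one_mats)
    ultimately show "X \<in> convex hull ?T"
      using convex_cone_sum_list[OF hull_T] by simp
  qed
  show "convex hull ?T \<subseteq> S"
    using S by (intro hull_minimal) (auto simp: convex_cone_def)
qed

theorem ROG_psd_mult_in_convex_cone:
  fixes c :: "real^'n"
  assumes K: "convex_cone K" and "closed K"
  shows "ROG {X \<in> psd_cone. X *v c \<in> K}"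
proof -
  let ?S = "{X \<in> psd_cone. X *v c \<in> K}"
  have "closed ?S"
  proof -
    have S_eq: "?S = psd_cone \<inter> (\<lambda>X. X *v c) -` K" by auto
    show ?thesis
      unfolding S_eq by (intro closed_Int closed_psd_cone closed_vimage \<open>closed K\<close>
          continuous_on_matrix_vector_mult_left)
  qed
  have S: "convex_cone ?S"
    unfolding convex_cone_iff
  proof (intro conjI ballI allI impI)
    show "0 \<in> ?S"
      by (simp add: convex_cone_contains_0[OF K] convex_cone_contains_0[OF convex_cone_psd_cone])
    show "X + Y \<in> ?S" if "X \<in> ?S" "Y \<in> ?S" for X Y
      using that by (simp add: convex_cone_add[OF K] convex_cone_add[OF convex_cone_psd_cone]
          matrix_vector_mult_add_rdistrib)
    show "t *\<^sub>R X \<in> ?S" if "X \<in> ?S" "0 \<le> t" for X t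
      using that by (simp add: convex_cone_scaleR[OF K] convex_cone_scaleR[OF convex_cone_psd_cone]
          scaleR_matrix_vector_assoc[symmetric])
  qed
  have decomp: "\<exists>xs. X = sum_list (map outer xs) \<and> (\<forall>x \<in> set xs. outer x \<in> ?S)" if "X \<in> ?S" for X
  proof -
    from that have X: "X \<in> psd_cone" and "X *v c \<in> K" by auto
    obtain y xs where X_eq: "X = sum_list (map outer (y # xs))" and "outer y *v c = X *v c"
      and orth: "\<forall>x \<in> set xs. x \<bullet> c = 0"
      using psd_eq_sum_list_outer_along[OF X] by blast
    with \<open>X *v c \<in> K\<close> have "outer y \<in> ?S" by (simp add: outer_in_psd_cone)
    moreover have "outer x \<in> ?S" if "x \<in> set xs" for x
      using that orth K by (simp add: outer_in_psd_cone outer_mult convex_cone_contains_0)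
    ultimately show ?thesis using X_eq by (intro exI[of _ "y # xs"]) auto
  qed
  have "convex hull (?S \<inter> rank_one_mats) = ?S"
    by (rule convex_hull_rank_one_mats_eq[OF S decomp])
  moreover have "convex ?S" and "cone ?S"
    using S by (simp_all add: convex_cone_def conic_def cone_def)
  ultimately show ?thesis
    using \<open>closed ?S\<close> by (simp add: ROG_def)
qed

theorem corollary3p6:
  fixes a b c :: "real^'n"
  shows "ROG {X \<in> psd_cone. 0 \<le> a \<bullet> (X *v c) \<and> 0 \<le> b \<bullet> (X *v c)}"
proof -
  let ?K = "{v. 0 \<le> a \<bullet> v} \<inter> {v. 0 \<le> b \<bullet> v}"
  have "convex_cone ?K"
    by (auto simp: convex_cone_iff inner_add_right)
  moreover have "closed ?K"
    using closed_halfspace_ge by blast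
  ultimately show ?thesis
    using ROG_psd_mult_in_convex_cone[of ?K c] by simp
qed

end
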